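(* Let $A\in\mathbb{R}^{n\times d}$, $b\in\mathbb{R}^n$, and suppose $Ax=b$ admits a solution $x^*$. Let $\lbrace W_1,\ldots,W_N\rbrace\subset\mathbb{R}^n$ and let $w$ be a random variable with $\mathbb{P}[w=W_j]>0$ for $j=1,\ldots,N$ and $\sum_j\mathbb{P}[w=W_j]=1$. Let $\lbrace w_\ell:\ell\geq0\rbrace$ be sampled from $\lbrace W_1,\ldots,W_N\rbrace$ without replacement, the set being repopulated with its original elements once exhausted and sampling without replacement repeated. Let $\mathcal{N}(w) = \mathrm{span}\lbrace z\in\mathbb{R}^d:\mathbb{P}[z'A'w=0]=1\rbrace$, $\mathcal{R}(w) = \mathcal{N}(w)^\perp$; let $x_0\in\mathbb{R}^d$ be arbitrary and $x_{k+1} = x_k + A'w_kw_k'(b-Ax_k)/\|A'w_k\|_2^2$. Define $\tau_0=0$, $\tau_1=\min\lbrace k\geq0:\mathrm{span}\lbrace A'w_0,\ldots,A'w_k\rbrace=\mathcal{R}(w)\rbrace$, and for $\ell\geq2$, $\tau_\ell=\min\lbrace k>\tau_{\ell-1}:\mathrm{span}\lbrace A'w_{\tau_{\ell-1}+1},\ldots,A'w_k\rbrace=\mathcal{R}(w)\rbrace$ if $\tau_{\ell-1}<\infty$, else $\infty$; let $\mathcal{F}_\ell$ be the set of matrices whose columns form a maximal linearly independent subset of $\lbrace A'w_{\tau_{\ell-1}+1}/\|A'w_{\tau_{\ell-1}+1}\|_2,\ldots,A'w_{\tau_\ell}/\|A'w_{\tau_\ell}\|_2\rbrace$ and $\gamma_\ell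 = 1-\min_{F\in\mathcal{F}_\ell}\det(F'F)$. Then (1) $\tau_\ell - \tau_{\ell-1}\leq 2N$ for all $\ell\in\mathbb{N}$, and (2) $\lim_{\ell\to\infty}\prod_{j=1}^\ell\gamma_j = 0$. Moreover, the $\gamma_j$ are uniformly bounded by some $\gamma\in[0,1)$ that depends on $\lbrace A'W_1,\ldots,A'W_N\rbrace$, and therefore, with probability one, $$\|x_{2N\ell} - x^* - P_{\mathcal{N}(w)}(x_0-x^* )\|_2^2 \leq \gamma^\ell\|P_{\mathcal{R}(w)}(x_0-x^* )\|_2^2.$$
   Context: $P_W$ is orthogonal projection onto $W$; $A'$ is the transpose. The iteration presupposes $A'w_k\neq0$. *)

theory Defs
  imports "HOL-Probability.Probability"
begin

definition nullsp :: "real^'d^'n \<Rightarrow> (real^'n) pmf \<Rightarrow> (real^'d) set" where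
  "nullsp A w = span {z. measure_pmf.prob w {v. z \<bullet> (transpose A *v v) = 0} = 1}"

definition orth_comp :: "'a::real_inner set \<Rightarrow> 'a set" where
  "orth_comp S = {y. \<forall>z\<in>S. y \<bullet> z = 0}"

definition proj :: "'a::real_inner set \<Rightarrow> 'a \<Rightarrow> 'a" where
  "proj S x = (THE p. p \<in> S \<and> (\<forall>y\<in>S. (x - p) \<bullet> y = 0))"

text \<open>Sampling without replacement with repopulation: every consecutive block of
  N samples is an enumeration of the N-element set W.\<close>
definition block_perm :: "nat \<Rightarrow> 'a set \<Rightarrow> (nat \<Rightarrow> 'a) \<Rightarrow> bool" where
  "block_perm N W ws = (\<forall>k. bij_betw (\<lambda>i. ws (k * N + i)) {..<N} W)"

primrec kacz :: "real^'d^'n \<Rightarrow> real^'n \<Rightarrow> (nat \<Rightarrow> real^'n) \<Rightarrow> real^'d \<Rightarrow> nat \<Rightarrow> real^'d" where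
  "kacz A b ws x0 0 = x0"
| "kacz A b ws x0 (Suc k) =
     kacz A b ws x0 k + ((ws k \<bullet> (b - A *v kacz A b ws x0 k)) / (norm (transpose A *v ws k))^2)
        *\<^sub>R (transpose A *v ws k)"

definition spans_from :: "real^'d^'n \<Rightarrow> (nat \<Rightarrow> real^'n) \<Rightarrow> (real^'d) set \<Rightarrow> nat \<Rightarrow> nat \<Rightarrow> bool" where
  "spans_from A ws R s k = (span ((\<lambda>i. transpose A *v ws i) ` {s..k}) = R)"

fun tau :: "real^'d^'n \<Rightarrow> (nat \<Rightarrow> real^'n) \<Rightarrow> (real^'d) set \<Rightarrow> nat \<Rightarrow> enat" where
  "tau A ws R 0 = 0"
| "tau A ws R (Suc 0) =
     (if \<exists>k. spans_from A ws R 0 k then enat (LEAST k. spans_from A ws R 0 k) else \<infinity>)"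
| "tau A ws R (Suc (Suc l)) =
     (case tau A ws R (Suc l) of
        \<infinity> \<Rightarrow> \<infinity>
      | enat t \<Rightarrow> (if \<exists>k>t. spans_from A ws R (Suc t) k
                   then enat (LEAST k. t < k \<and> spans_from A ws R (Suc t) k) else \<infinity>))"

text \<open>Normalized vectors A'w_i / norm(A'w_i) of the l-th block (for l = 1 the block starts
  at index 0, as in the definition of tau_1).\<close>
definition normcols :: "real^'d^'n \<Rightarrow> (nat \<Rightarrow> real^'n) \<Rightarrow> (real^'d) set \<Rightarrow> nat \<Rightarrow> (real^'d) set" where
  "normcols A ws R l =
     (let s = (if l = 1 then 0 else Suc (the_enat (tau A ws R (l - 1)))) in
      (\<lambda>i. (1 / norm (transpose A *v ws i)) *\<^sub>R (transpose A *v ws i)) `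
        {i. s \<le> i \<and> enat i \<le> tau A ws R l})"

text \<open>det(F'F) for the matrix F with columns vs: Leibniz formula for the Gram matrix.\<close>
definition gram_det :: "'a::real_inner list \<Rightarrow> real" where
  "gram_det vs = (\<Sum>p\<in>{p. p permutes {..<length vs}}.
      of_int (sign p) * (\<Prod>i<length vs. vs ! i \<bullet> vs ! (p i)))"

text \<open>Matrices (as lists of columns) whose columns form a maximal linearly independent subset of S.\<close>
definition Fmats :: "'a::real_vector set \<Rightarrow> 'a list set" where
  "Fmats S = {vs. distinct vs \<and> set vs \<subseteq> S \<and> independent (set vs) \<and>
                 (\<forall>T. set vs \<subseteq> T \<and> T \<subseteq> S \<and> independent T \<longrightarrow> T = set vs)}"

definition gamma :: "real^'d^'n \<Rightarrow> (nat \<Rightarrow> real^'n) \<Rightarrow> (real^'d) set \<Rightarrow> nat \<Rightarrow> real" where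
  "gamma A ws R l = 1 - Min (gram_det ` Fmats (normcols A ws R l))"

end

(* Write e_k = x_k - xstar - P_N (x_0 - xstar). Since every A'w_k is orthogonal to N(w), the Kaczmarz
   step acts on e_k as the orthogonal projection onto the hyperplane orthogonal to the unit vector
   u_k = A'w_k / |A'w_k|, and e_0 = P_R (x_0 - xstar) lies in R(w) = span {A'W_j}, where e_k stays.
   Any 2N consecutive samples contain a complete enumeration of W, so every window of length 2N spans
   R(w); this bounds tau_l - tau_(l-1). Over one block the composed projections contract R(w) by the
   factor 1 - det(F'F) (Meany's inequality), where F is the maximal independent sublist of the block's
   unit vectors obtained by dropping every u that lies in the span of the later ones. For that choice
   det(F'F) is the product of the squared distances of each column to the span of the following
   columns, hence lies in (0, 1]. Only finitely many independent lists can be formed from the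
   normalized vectors A'W_j, so gamma_l is bounded by a constant g < 1 independent of the sample path. *)

theory Submission
  imports Defs "Jordan_Normal_Form.Determinant"
begin

no_notation Matrix.scalar_prod (infix \<open>\<bullet>\<close> 70)
hide_const (open) Matrix.orthogonal
hide_fact (open) Matrix.orthogonal_def

lemma orth_comp_eq_orthogonal_comp: "orth_comp S = orthogonal_comp S"
  by (auto simp: orth_comp_def orthogonal_comp_def orthogonal_def inner_commute)

lemma subspace_orth_comp: "subspace (orth_comp S)"
  by (simp add: orth_comp_eq_orthogonal_comp subspace_orthogonal_comp)

lemma orth_comp_span: "orth_comp (span S) = orth_comp S"
proof
  show "orth_comp S \<subseteq> orth_comp (span S)"
  proof
    fix x assume x: "x \<in> orth_comp S"
    have "orthogonal x z" if "z \<in> span S" for z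
      by (rule orthogonal_to_span[OF that]) (use x in \<open>simp add: orth_comp_def orthogonal_def\<close>)
    then show "x \<in> orth_comp (span S)" by (simp add: orth_comp_def orthogonal_def)
  qed
qed (auto simp: orth_comp_def span_base)

lemma orth_comp_orth_comp:
  fixes S :: "'a::euclidean_space set"
  shows "orth_comp (orth_comp S) = span S"
proof -
  have "orth_comp S = orth_comp (span S)" by (rule orth_comp_span[symmetric])
  then show ?thesis
    using orthogonal_comp_self[OF subspace_span[of S]] by (simp add: orth_comp_eq_orthogonal_comp)
qed

lemma proj_eqI:
  assumes "subspace S" "p \<in> S" "\<And>y. y \<in> S \<Longrightarrow> (x - p) \<bullet> y = 0"
  shows "proj S x = p"
  unfolding proj_def
proof (rule the_equality)
  fix p' assume p': "p' \<in> S \<and> (\<forall>y\<in>S. (x - p') \<bullet> y = 0)"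
  have "p' - p \<in> S" using assms p' by (simp add: subspace_diff)
  then have "(p' - p) \<bullet> (p' - p) = (x - p) \<bullet> (p' - p) - (x - p') \<bullet> (p' - p)"
    by (simp add: inner_diff_left)
  also have "\<dots> = 0" using assms p' \<open>p' - p \<in> S\<close> by simp
  finally show "p' = p" by simp
qed (use assms in simp)

lemma
  fixes x :: "'a::euclidean_space"
  shows proj_span_in: "proj (span S) x \<in> span S"
    and proj_span_orthogonal: "y \<in> span S \<Longrightarrow> (x - proj (span S) x) \<bullet> y = 0"
proof -
  obtain p z where p: "p \<in> span S" and z: "\<And>y. y \<in> span S \<Longrightarrow> orthogonal z y" and "x = p + z"
    using orthogonal_subspace_decomp_exists[of S x] by blast
  then have orth: "(x - p) \<bullet> y = 0" if "y \<in> span S" for y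
    using z[OF that] by (simp add: orthogonal_def)
  have "proj (span S) x = p"
    by (rule proj_eqI[OF subspace_span p orth])
  then show "proj (span S) x \<in> span S" "y \<in> span S \<Longrightarrow> (x - proj (span S) x) \<bullet> y = 0"
    using p orth by simp_all
qed

lemma norm_sub_proj_span_le:
  fixes x :: "'a::euclidean_space"
  shows "norm (x - proj (span S) x) \<le> norm x"
proof -
  let ?p = "proj (span S) x"
  have "orthogonal (x - ?p) ?p"
    by (simp add: orthogonal_def proj_span_in proj_span_orthogonal)
  from norm_add_Pythagorean[OF this]
  have "(norm (x - ?p))\<^sup>2 \<le> (norm x)\<^sup>2" by simp
  then show ?thesis by (rule power2_le_imp_le) simp
qed

lemma sub_proj_span_in_orth_comp:
  fixes x :: "'a::euclidean_space"
  shows "x - proj (span S) x \<in> orth_comp S"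
  by (simp add: orth_comp_def proj_span_orthogonal span_base)

lemma proj_orth_comp:
  fixes x :: "'a::euclidean_space"
  shows "proj (orth_comp S) x = x - proj (span S) x"
proof (rule proj_eqI)
  show "x - proj (span S) x \<in> orth_comp S" by (rule sub_proj_span_in_orth_comp)
  fix y assume "y \<in> orth_comp S"
  then have "y \<in> orth_comp (span S)" by (simp only: orth_comp_span)
  then have "y \<bullet> proj (span S) x = 0" by (simp add: orth_comp_def proj_span_in)
  then show "(x - (x - proj (span S) x)) \<bullet> y = 0" by (simp add: inner_commute)
qed (rule subspace_orth_comp)

section \<open>Gram determinants\<close>

definition gram_mat :: "'a::real_inner list \<Rightarrow> real mat" where
  "gram_mat vs = mat (length vs) (length vs) (\<lambda>(i, j). vs ! i \<bullet> vs ! j)"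

lemma gram_det_eq_det_gram_mat: "gram_det vs = Determinant.det (gram_mat vs)"
  unfolding gram_det_def Determinant.det_def gram_mat_def by (simp add: atLeast0LessThan)

lemma gram_mat_lincomb:
  fixes xs ys :: "'a::real_inner list"
  assumes E: "E \<in> carrier_mat m m" and len: "length xs = m" "length ys = m"
    and xs: "\<And>i. i < m \<Longrightarrow> xs ! i = (\<Sum>k<m. E $$ (i, k) *\<^sub>R ys ! k)"
  shows "gram_mat xs = E * gram_mat ys * transpose_mat E"
proof (rule eq_matI)
  fix i j assume "i < dim_row (E * gram_mat ys * transpose_mat E)" "j < dim_col (E * gram_mat ys * transpose_mat E)"
  then have i: "i < m" and j: "j < m" using E by auto
  have "gram_mat xs $$ (i, j) = (\<Sum>k<m. \<Sum>l<m. E $$ (i, k) * E $$ (j, l) * (ys ! k \<bullet> ys ! l))"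
    using i j len xs[OF i] xs[OF j]
    by (simp add: gram_mat_def inner_sum_left inner_sum_right sum_distrib_left mult.assoc)
  also have "\<dots> = (\<Sum>l<m. (\<Sum>k<m. E $$ (i, k) * (ys ! k \<bullet> ys ! l)) * E $$ (j, l))"
    by (simp add: sum_distrib_left sum_distrib_right mult_ac) (rule sum.swap)
  also have "\<dots> = (E * gram_mat ys * transpose_mat E) $$ (i, j)"
    using E len i j by (simp add: gram_mat_def scalar_prod_def atLeast0LessThan)
  finally show "gram_mat xs $$ (i, j) = (E * gram_mat ys * transpose_mat E) $$ (i, j)" .
qed (use E len in \<open>auto simp: gram_mat_def\<close>)

lemma gram_det_lincomb:
  fixes xs ys :: "'a::real_inner list"
  assumes E: "E \<in> carrier_mat m m" and len: "length xs = m" "length ys = m"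
    and xs: "\<And>i. i < m \<Longrightarrow> xs ! i = (\<Sum>k<m. E $$ (i, k) *\<^sub>R ys ! k)"
  shows "gram_det xs = (Determinant.det E)\<^sup>2 * gram_det ys"
proof -
  have G: "gram_mat ys \<in> carrier_mat m m" using len by (simp add: gram_mat_def)
  have "gram_det xs = Determinant.det (E * gram_mat ys * transpose_mat E)"
    by (simp add: gram_det_eq_det_gram_mat gram_mat_lincomb[OF E len xs])
  also have "\<dots> = Determinant.det E * Determinant.det (gram_mat ys) * Determinant.det E"
    using E G by (simp add: det_mult[of _ m] det_transpose)
  finally show ?thesis by (simp add: gram_det_eq_det_gram_mat power2_eq_square)
qed

lemma gram_det_Cons_orthogonal:
  assumes "\<And>x. x \<in> set vs \<Longrightarrow> v \<bullet> x = 0"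
  shows "gram_det (v # vs) = (norm v)\<^sup>2 * gram_det vs"
proof -
  let ?n = "length vs"
  let ?a = "mat 1 1 (\<lambda>_. v \<bullet> v)"
  have orth: "v \<bullet> vs ! k = 0" if "k < ?n" for k
    using assms nth_mem that by blast
  have orth': "vs ! k \<bullet> v = 0" if "k < ?n" for k
    using orth[OF that] by (simp add: inner_commute)
  have blocks: "gram_mat (v # vs) = four_block_mat ?a (0\<^sub>m 1 ?n) (0\<^sub>m ?n 1) (gram_mat vs)"
  proof (rule eq_matI)
    fix i j assume "i < dim_row (four_block_mat ?a (0\<^sub>m 1 ?n) (0\<^sub>m ?n 1) (gram_mat vs))"
      "j < dim_col (four_block_mat ?a (0\<^sub>m 1 ?n) (0\<^sub>m ?n 1) (gram_mat vs))"
    then show "gram_mat (v # vs) $$ (i, j) = four_block_mat ?a (0\<^sub>m 1 ?n) (0\<^sub>m ?n 1) (gram_mat vs) $$ (i, j)"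
      by (cases i; cases j) (auto simp: gram_mat_def orth orth')
  qed (auto simp: gram_mat_def)
  have "Determinant.det ?a = v \<bullet> v"
    by (subst det_upper_triangular[of _ 1]) (auto simp: diag_mat_def upper_triangular_def)
  moreover have "Determinant.det (four_block_mat ?a (0\<^sub>m 1 ?n) (0\<^sub>m ?n 1) (gram_mat vs))
      = Determinant.det ?a * Determinant.det (gram_mat vs)"
    by (rule det_four_block_mat_lower_left_zero_col) (auto simp: gram_mat_def)
  ultimately show ?thesis
    by (simp add: gram_det_eq_det_gram_mat blocks power2_norm_eq_inner)
qed

lemma span_set_lincomb:
  fixes vs :: "'a::real_vector list"
  assumes "p \<in> span (set vs)"
  shows "\<exists>c. p = (\<Sum>k<length vs. c k *\<^sub>R vs ! k)"
  using assms
proof (induction vs arbitrary: p)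
  case (Cons a vs)
  then obtain t where "p - t *\<^sub>R a \<in> span (set vs)"
    by (auto simp: span_insert)
  with Cons.IH obtain c where "p - t *\<^sub>R a = (\<Sum>k<length vs. c k *\<^sub>R vs ! k)" by blast
  then have "p = (\<Sum>k<length (a # vs). (case k of 0 \<Rightarrow> t | Suc k \<Rightarrow> c k) *\<^sub>R (a # vs) ! k)"
    by (simp add: sum.lessThan_Suc_shift algebra_simps del: sum.lessThan_Suc)
  then show ?case by blast
qed simp

lemma gram_det_Cons_sub_span:
  assumes p: "p \<in> span (set vs)"
  shows "gram_det (v # vs) = gram_det ((v - p) # vs)"
proof -
  let ?n = "length vs"
  obtain c where c: "p = (\<Sum>k<?n. c k *\<^sub>R vs ! k)"
    using span_set_lincomb[OF p] by blast
  define E :: "real mat" where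
    "E = mat (Suc ?n) (Suc ?n) (\<lambda>(i, j). if i = j then 1 else if i = 0 then c (j - 1) else 0)"
  have E: "E \<in> carrier_mat (Suc ?n) (Suc ?n)" by (simp add: E_def)
  have rows: "(v # vs) ! i = (\<Sum>k<Suc ?n. E $$ (i, k) *\<^sub>R ((v - p) # vs) ! k)" if "i < Suc ?n" for i
  proof -
    have "(\<Sum>k<Suc ?n. E $$ (i, k) *\<^sub>R ((v - p) # vs) ! k)
        = E $$ (i, 0) *\<^sub>R (v - p) + (\<Sum>k<?n. E $$ (i, Suc k) *\<^sub>R vs ! k)"
      by (simp add: sum.lessThan_Suc_shift del: sum.lessThan_Suc)
    also have "\<dots> = (v # vs) ! i"
    proof (cases i)
      case 0
      have "(\<Sum>k<?n. E $$ (0, Suc k) *\<^sub>R vs ! k) = p"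
        unfolding c by (rule sum.cong) (simp_all add: E_def)
      then show ?thesis using 0 by (simp add: E_def)
    next
      case (Suc i')
      then have "i' < ?n" using that by simp
      have "(\<Sum>k<?n. E $$ (Suc i', Suc k) *\<^sub>R vs ! k) = (\<Sum>k<?n. if i' = k then vs ! k else 0)"
        by (rule sum.cong) (simp_all add: E_def \<open>i' < ?n\<close>)
      also have "\<dots> = vs ! i'" using \<open>i' < ?n\<close> by simp
      finally show ?thesis using \<open>i' < ?n\<close> Suc by (simp add: E_def)
    qed
    finally show ?thesis by simp
  qed
  have "upper_triangular E" by (auto simp: E_def upper_triangular_def)
  moreover have "(\<Prod>i = 0..<Suc ?n. E $$ (i, i)) = 1"
    by (rule prod.neutral) (simp add: E_def)
  ultimately have "Determinant.det E = 1"
    using det_upper_triangular[OF _ E] E by (simp add: prod_list_diag_prod)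
  moreover have "gram_det (v # vs) = (Determinant.det E)\<^sup>2 * gram_det ((v - p) # vs)"
    by (rule gram_det_lincomb[OF E]) (use rows in auto)
  ultimately show ?thesis by simp
qed

lemma gram_det_Cons:
  fixes v :: "'a::euclidean_space"
  shows "gram_det (v # vs) = (norm (v - proj (span (set vs)) v))\<^sup>2 * gram_det vs"
proof -
  let ?p = "proj (span (set vs)) v"
  have "gram_det (v # vs) = gram_det ((v - ?p) # vs)"
    by (rule gram_det_Cons_sub_span) (rule proj_span_in)
  also have "\<dots> = (norm (v - ?p))\<^sup>2 * gram_det vs"
    by (rule gram_det_Cons_orthogonal) (simp add: proj_span_orthogonal span_base)
  finally show ?thesis .
qed

lemma gram_det_Nil: "gram_det [] = 1"
proof -
  have "{p. p permutes {..<0::nat}} = {id}" by (auto simp: permutes_empty)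
  then show ?thesis by (simp add: gram_det_def)
qed

lemma gram_det_nonneg:
  fixes vs :: "'a::euclidean_space list"
  shows "0 \<le> gram_det vs"
  by (induction vs) (simp_all add: gram_det_Nil gram_det_Cons)

lemma gram_det_le_1:
  fixes vs :: "'a::euclidean_space list"
  assumes "\<And>v. v \<in> set vs \<Longrightarrow> norm v = 1"
  shows "gram_det vs \<le> 1"
  using assms
proof (induction vs)
  case (Cons v vs)
  have "norm (v - proj (span (set vs)) v) \<le> 1"
    using norm_sub_proj_span_le[of v "set vs"] Cons.prems by simp
  then have "(norm (v - proj (span (set vs)) v))\<^sup>2 \<le> 1"
    by (simp add: power_le_one)
  moreover have "gram_det vs \<le> 1" using Cons by simp
  ultimately show ?case
    by (simp add: gram_det_Cons mult_le_one gram_det_nonneg)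
qed (simp add: gram_det_Nil)

lemma gram_det_pos:
  fixes vs :: "'a::euclidean_space list"
  assumes "distinct vs" "independent (set vs)"
  shows "0 < gram_det vs"
  using assms
proof (induction vs)
  case (Cons v vs)
  then have "v \<notin> span (set vs)" and "independent (set vs)"
    by (auto simp: independent_insert)
  then have "v - proj (span (set vs)) v \<noteq> 0"
    using proj_span_in[of "set vs" v] by auto
  then show ?case using Cons \<open>independent (set vs)\<close> by (simp add: gram_det_Cons)
qed (simp add: gram_det_Nil)

section \<open>Meany's inequality\<close>

(* Testing u against the span of the later vectors matches gram_det_Cons, which splits off the head. *)
fun greedy_basis :: "'a::real_vector list \<Rightarrow> 'a list" where
  "greedy_basis [] = []"
| "greedy_basis (u # us) = (if u \<in> span (set us) then greedy_basis us else u # greedy_basis us)"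

lemma set_greedy_basis_subset: "set (greedy_basis us) \<subseteq> set us"
  by (induction us) auto

lemma span_greedy_basis: "span (set (greedy_basis us)) = span (set us)"
proof (induction us)
  case (Cons u us)
  show ?case
  proof (cases "u \<in> span (set us)")
    case True
    with Cons show ?thesis by (simp add: span_redundant)
  next
    case False
    with Cons show ?thesis by (simp add: span_insert)
  qed
qed simp

lemma distinct_independent_greedy_basis:
  "distinct (greedy_basis us) \<and> independent (set (greedy_basis us))"
proof (induction us)
  case (Cons u us)
  then show ?case
    using set_greedy_basis_subset[of us] span_greedy_basis[of us] span_base[of u "set us"]
    by (auto simp: independent_insert)
qed (simp add: independent_empty)

lemma greedy_basis_in_Fmats: "greedy_basis us \<in> Fmats (set us)"
  unfolding Fmats_def
proof (intro CollectI conjI allI impI)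
  show "distinct (greedy_basis us)" "independent (set (greedy_basis us))"
    using distinct_independent_greedy_basis by blast+
  show "set (greedy_basis us) \<subseteq> set us" by (rule set_greedy_basis_subset)
  fix T assume T: "set (greedy_basis us) \<subseteq> T \<and> T \<subseteq> set us \<and> independent T"
  show "T = set (greedy_basis us)"
  proof (rule ccontr)
    assume "T \<noteq> set (greedy_basis us)"
    then obtain x where x: "x \<in> T" "x \<notin> set (greedy_basis us)" using T by blast
    have "x \<in> span (set (greedy_basis us))"
      using x T span_base span_greedy_basis by blast
    also have "\<dots> \<subseteq> span (T - {x})" using T x by (intro span_mono) blast
    finally have "x \<in> span (T - {x})" .
    then show False using T x independent_insert[of x "T - {x}"] by (simp add: insert_absorb)
  qed
qed

lemma finite_Fmats: "finite S \<Longrightarrow> finite (Fmats S)"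
  by (rule finite_subset[OF _ finite_subset_distinct]) (auto simp: Fmats_def)

fun sweep :: "'a::real_inner list \<Rightarrow> 'a \<Rightarrow> 'a" where
  "sweep [] y = y"
| "sweep (u # us) y = sweep us (y - (u \<bullet> y) *\<^sub>R u)"

lemma sweep_append: "sweep (us @ vs) y = sweep vs (sweep us y)"
  by (induction us arbitrary: y) auto

lemma sweep_in_span: "set us \<subseteq> span S \<Longrightarrow> y \<in> span S \<Longrightarrow> sweep us y \<in> span S"
  by (induction us arbitrary: y) (auto intro!: span_diff span_mul)

lemma sweep_add_orthogonal:
  "(\<And>u. u \<in> set us \<Longrightarrow> u \<bullet> c = 0) \<Longrightarrow> sweep us (a + c) = sweep us a + c"
proof (induction us arbitrary: a)
  case (Cons u us)
  have step: "a + c - (u \<bullet> (a + c)) *\<^sub>R u = (a - (u \<bullet> a) *\<^sub>R u) + c"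
    using Cons.prems[of u] by (simp add: inner_add_right algebra_simps)
  have "sweep (u # us) (a + c) = sweep us ((a - (u \<bullet> a) *\<^sub>R u) + c)"
    by (simp only: sweep.simps step)
  also have "\<dots> = sweep us (a - (u \<bullet> a) *\<^sub>R u) + c"
    using Cons by simp
  finally show ?case by simp
qed simp

lemma norm_sweep_add_orthogonal:
  fixes a c :: "'a::real_inner"
  assumes a: "a \<in> span (set us)" and c: "\<And>x. x \<in> span (set us) \<Longrightarrow> c \<bullet> x = 0"
  shows "(norm (sweep us (a + c)))\<^sup>2 = (norm (sweep us a))\<^sup>2 + (norm c)\<^sup>2"
proof -
  have "u \<bullet> c = 0" if "u \<in> set us" for u
    using c[OF span_base[OF that]] by (simp add: inner_commute)
  then have "sweep us (a + c) = sweep us a + c" by (rule sweep_add_orthogonal)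
  moreover have "sweep us a \<in> span (set us)"
    using a by (intro sweep_in_span) (auto intro: span_base)
  then have "c \<bullet> sweep us a = 0" by (rule c)
  then have "orthogonal (sweep us a) c" by (simp add: orthogonal_def inner_commute)
  ultimately show ?thesis using norm_add_Pythagorean by simp
qed

lemma norm_sweep_step:
  assumes "norm u = 1"
  shows "(norm (y - (u \<bullet> y) *\<^sub>R u))\<^sup>2 = (norm y)\<^sup>2 - (u \<bullet> y)\<^sup>2"
proof -
  have "u \<bullet> u = 1" using assms by (simp add: norm_eq_1)
  then show ?thesis unfolding power2_norm_eq_inner
    by (simp add: inner_diff_left inner_diff_right inner_commute power2_eq_square)
qed

lemma span_insert_orthogonal_multiple:
  fixes u c :: "'a::euclidean_space"
  assumes c: "c \<in> span (insert u K)" and c_orth: "\<And>x. x \<in> span K \<Longrightarrow> c \<bullet> x = 0"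
  obtains \<alpha> where "c = \<alpha> *\<^sub>R (u - proj (span K) u)"
proof -
  let ?q = "proj (span K) u"
  obtain \<alpha> where "c - \<alpha> *\<^sub>R u \<in> span K" using c by (auto simp: span_insert)
  moreover have "c - \<alpha> *\<^sub>R (u - ?q) = (c - \<alpha> *\<^sub>R u) + \<alpha> *\<^sub>R ?q"
    by (simp add: algebra_simps)
  ultimately have "c - \<alpha> *\<^sub>R (u - ?q) \<in> span K"
    using proj_span_in[of K u] by (simp only: span_add span_scale)
  then have "(c - \<alpha> *\<^sub>R (u - ?q)) \<bullet> (c - \<alpha> *\<^sub>R (u - ?q)) = 0"
    using c_orth proj_span_orthogonal[of _ K u] by (simp add: inner_diff_left)
  then show ?thesis using that[of \<alpha>] by simp
qed

lemma norm_proj_span_ge: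
  fixes u z :: "'a::euclidean_space"
  assumes u: "norm u = 1" and zu: "z \<bullet> u = 0" and z: "z \<in> span (insert u K)"
  shows "(norm (u - proj (span K) u))\<^sup>2 * (norm z)\<^sup>2 \<le> (norm (proj (span K) z))\<^sup>2"
proof -
  define q s a where "q = proj (span K) u" and "s = u - q" and "a = proj (span K) z"
  define \<delta> where "\<delta> = (norm s)\<^sup>2"
  have q: "q \<in> span K" and a: "a \<in> span K"
    by (simp_all add: q_def a_def proj_span_in)
  have s_orth: "s \<bullet> x = 0" and za_orth: "(z - a) \<bullet> x = 0" if "x \<in> span K" for x
    using that by (simp_all add: s_def q_def a_def proj_span_orthogonal)
  have "a \<in> span (insert u K)" using a span_mono[of K "insert u K"] by blast
  then have "z - a \<in> span (insert u K)" using z by (rule span_diff[rotated])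
  then obtain \<alpha> where za: "z - a = \<alpha> *\<^sub>R s"
    using span_insert_orthogonal_multiple za_orth unfolding s_def q_def by blast
  have z_eq: "z = a + \<alpha> *\<^sub>R s" unfolding za[symmetric] by simp
  have u_eq: "q + s = u" by (simp add: s_def)
  have "0 = z \<bullet> u" using zu by simp
  also have "\<dots> = (a + \<alpha> *\<^sub>R s) \<bullet> (q + s)" by (simp only: z_eq u_eq)
  also have "\<dots> = a \<bullet> q + \<alpha> * \<delta>"
    using s_orth[OF q] s_orth[OF a]
    by (simp add: inner_add_left inner_add_right \<delta>_def power2_norm_eq_inner inner_commute)
  finally have aq: "a \<bullet> q = - \<alpha> * \<delta>" by simp
  have "(norm u)\<^sup>2 = (norm q)\<^sup>2 + \<delta>"
    using norm_add_Pythagorean[of q s] s_orth[OF q] by (simp add: orthogonal_def s_def \<delta>_def inner_commute)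
  then have "(norm q)\<^sup>2 = 1 - \<delta>" using u by simp
  then have cs: "\<alpha>\<^sup>2 * \<delta>\<^sup>2 \<le> (norm a)\<^sup>2 * (1 - \<delta>)"
    using Cauchy_Schwarz_ineq[of a q] aq by (simp add: power2_norm_eq_inner power_mult_distrib)
  have "orthogonal a (z - a)" using za_orth[OF a] by (simp add: orthogonal_def inner_commute)
  then have "(norm z)\<^sup>2 = (norm a)\<^sup>2 + (norm (z - a))\<^sup>2"
    using norm_add_Pythagorean[of a "z - a"] by simp
  also have "(norm (z - a))\<^sup>2 = \<alpha>\<^sup>2 * \<delta>" by (simp add: za \<delta>_def power_mult_distrib)
  finally have "\<delta> * (norm z)\<^sup>2 = \<delta> * (norm a)\<^sup>2 + \<alpha>\<^sup>2 * \<delta>\<^sup>2"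
    by (simp add: algebra_simps power2_eq_square)
  also have "\<dots> \<le> (norm a)\<^sup>2" using cs by (simp add: algebra_simps)
  finally show ?thesis by (simp add: \<delta>_def s_def q_def a_def)
qed

lemma norm_sweep_Cons_le:
  fixes us :: "'a::euclidean_space list"
  assumes unit: "norm u = 1" and zu: "z \<bullet> u = 0" and z: "z \<in> span (insert u (set us))"
    and D: "0 \<le> D" "\<And>a. a \<in> span (set us) \<Longrightarrow> (norm (sweep us a))\<^sup>2 \<le> (1 - D) * (norm a)\<^sup>2"
  shows "(norm (sweep us z))\<^sup>2 \<le> (1 - (norm (u - proj (span (set us)) u))\<^sup>2 * D) * (norm z)\<^sup>2"
proof -
  define a where "a = proj (span (set us)) z"
  have a: "a \<in> span (set us)" by (simp add: a_def proj_span_in)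
  have "(z - a) \<bullet> a = 0" using a by (simp add: a_def proj_span_orthogonal)
  then have z_split: "(norm z)\<^sup>2 = (norm a)\<^sup>2 + (norm (z - a))\<^sup>2"
    using norm_add_Pythagorean[of a "z - a"] by (simp add: orthogonal_def inner_commute)
  have "(norm (sweep us z))\<^sup>2 = (norm (sweep us a))\<^sup>2 + (norm (z - a))\<^sup>2"
    using norm_sweep_add_orthogonal[OF a, of "z - a"] by (simp add: a_def proj_span_orthogonal)
  also have "\<dots> \<le> (1 - D) * (norm a)\<^sup>2 + (norm (z - a))\<^sup>2"
    using D(2)[OF a] by simp
  also have "\<dots> = (norm z)\<^sup>2 - D * (norm a)\<^sup>2"
    using z_split by (simp add: algebra_simps)
  also have "\<dots> \<le> (norm z)\<^sup>2 - D * ((norm (u - proj (span (set us)) u))\<^sup>2 * (norm z)\<^sup>2)"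
    using norm_proj_span_ge[OF unit zu z] D(1) by (simp add: mult_left_mono a_def)
  finally show ?thesis by (simp add: algebra_simps)
qed

lemma norm_sweep_le_gram_det:
  fixes us :: "'a::euclidean_space list"
  assumes "\<And>u. u \<in> set us \<Longrightarrow> norm u = 1" and "y \<in> span (set us)"
  shows "(norm (sweep us y))\<^sup>2 \<le> (1 - gram_det (greedy_basis us)) * (norm y)\<^sup>2"
  using assms
proof (induction us arbitrary: y)
  case (Cons u us)
  define z where "z = y - (u \<bullet> y) *\<^sub>R u"
  have unit: "norm u = 1" and units: "\<And>v. v \<in> set us \<Longrightarrow> norm v = 1"
    using Cons.prems by auto
  have "z \<bullet> u = y \<bullet> u - (u \<bullet> y) * (u \<bullet> u)" by (simp add: z_def inner_diff_left)
  then have zu: "z \<bullet> u = 0" using unit by (simp add: norm_eq_1 inner_commute)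
  have z: "z \<in> span (insert u (set us))"
    using Cons.prems(2) by (simp add: z_def span_diff span_scale span_base)
  have "(norm (sweep us z))\<^sup>2 \<le> (1 - gram_det (greedy_basis (u # us))) * (norm z)\<^sup>2"
  proof (cases "u \<in> span (set us)")
    case True
    then have "z \<in> span (set us)" using z by (simp add: span_redundant)
    then show ?thesis using Cons.IH[OF units] True by simp
  next
    case False
    then show ?thesis
      using norm_sweep_Cons_le[OF unit zu z gram_det_nonneg Cons.IH[OF units]]
      by (simp add: gram_det_Cons span_greedy_basis)
  qed
  also have "\<dots> \<le> (1 - gram_det (greedy_basis (u # us))) * (norm y)\<^sup>2"
  proof (rule mult_left_mono)
    show "(norm z)\<^sup>2 \<le> (norm y)\<^sup>2"
      using norm_sweep_step[OF unit, of y] by (simp add: z_def)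
    have "gram_det (greedy_basis (u # us)) \<le> 1"
      by (rule gram_det_le_1) (use set_greedy_basis_subset[of "u # us"] Cons.prems(1) in blast)
    then show "0 \<le> 1 - gram_det (greedy_basis (u # us))" by simp
  qed
  finally show ?case by (simp add: z_def)
qed simp

section \<open>The Kaczmarz iteration as a sequence of projections\<close>

definition kacz_dir :: "real^'d^'n \<Rightarrow> (nat \<Rightarrow> real^'n) \<Rightarrow> nat \<Rightarrow> real^'d" where
  "kacz_dir A ws i = (1 / norm (transpose A *v ws i)) *\<^sub>R (transpose A *v ws i)"

lemma norm_kacz_dir: "transpose A *v ws i \<noteq> 0 \<Longrightarrow> norm (kacz_dir A ws i) = 1"
  by (simp add: kacz_dir_def)

lemma kacz_Suc_eq_sweep:
  assumes sol: "A *v xstar = b" and n: "n \<bullet> (transpose A *v ws k) = 0"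
  shows "kacz A b ws x (Suc k) - xstar - n
       = sweep [kacz_dir A ws k] (kacz A b ws x k - xstar - n)"
proof -
  define a e where "a = transpose A *v ws k" and "e = kacz A b ws x k - xstar - n"
  have "ws k \<bullet> (b - A *v kacz A b ws x k) = a \<bullet> (xstar - kacz A b ws x k)"
    by (simp add: a_def dot_lmul_matrix sol[symmetric] matrix_vector_mult_diff_distrib)
  also have "\<dots> = - (a \<bullet> e)"
    using n by (simp add: a_def e_def inner_diff_right inner_commute)
  finally have residual: "ws k \<bullet> (b - A *v kacz A b ws x k) = - (a \<bullet> e)" .
  have "kacz A b ws x (Suc k) - xstar - n
      = e + ((ws k \<bullet> (b - A *v kacz A b ws x k)) / (norm a)\<^sup>2) *\<^sub>R a"
    unfolding kacz.simps(2) a_def e_def by (simp add: algebra_simps)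
  also have "\<dots> = e - ((a \<bullet> e) / (norm a)\<^sup>2) *\<^sub>R a"
    unfolding residual by simp
  also have "\<dots> = sweep [kacz_dir A ws k] e"
    unfolding kacz_dir_def a_def[symmetric] by (simp add: power2_eq_square)
  finally show ?thesis by (simp add: e_def)
qed

lemma kacz_eq_sweep:
  assumes sol: "A *v xstar = b" and n: "\<And>i. n \<bullet> (transpose A *v ws i) = 0"
  shows "kacz A b ws x (s + m) - xstar - n
       = sweep (map (kacz_dir A ws) [s..<s + m]) (kacz A b ws x s - xstar - n)"
proof (induction m)
  case (Suc m)
  have "kacz A b ws x (s + Suc m) - xstar - n
      = sweep [kacz_dir A ws (s + m)] (kacz A b ws x (s + m) - xstar - n)"
    by (simp only: add_Suc_right kacz_Suc_eq_sweep[OF sol n])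
  then show ?case using Suc.IH by (simp add: sweep_append)
qed simp

definition block_start :: "real^'d^'n \<Rightarrow> (nat \<Rightarrow> real^'n) \<Rightarrow> (real^'d) set \<Rightarrow> nat \<Rightarrow> nat" where
  "block_start A ws R l = (if l = 0 then 0 else Suc (the_enat (tau A ws R l)))"

lemma block_start_0 [simp]: "block_start A ws R 0 = 0"
  by (simp add: block_start_def)

definition block_dirs :: "real^'d^'n \<Rightarrow> (nat \<Rightarrow> real^'n) \<Rightarrow> (real^'d) set \<Rightarrow> nat \<Rightarrow> (real^'d) list" where
  "block_dirs A ws R l = map (kacz_dir A ws) [block_start A ws R l..<block_start A ws R (Suc l)]"

lemma tau_Suc_enat:
  assumes windows: "\<And>s. spans_from A ws R s (s + m)"
  shows "\<exists>t. tau A ws R (Suc l) = enat t \<and> block_start A ws R (Suc l) = Suc t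
    \<and> block_start A ws R l \<le> t \<and> t \<le> block_start A ws R l + m
    \<and> spans_from A ws R (block_start A ws R l) t"
proof (induction l)
  case 0
  let ?t = "LEAST k. spans_from A ws R 0 k"
  have "spans_from A ws R 0 ?t" "?t \<le> m"
    using windows[of 0] by (auto intro: LeastI Least_le)
  then show ?case using windows[of 0] by (auto simp: block_start_def)
next
  case (Suc l)
  then obtain t where t: "tau A ws R (Suc l) = enat t" "block_start A ws R (Suc l) = Suc t"
    by blast
  let ?t = "LEAST k. t < k \<and> spans_from A ws R (Suc t) k"
  have witness: "t < Suc t + m \<and> spans_from A ws R (Suc t) (Suc t + m)"
    using windows[of "Suc t"] by simp
  then have "\<exists>k>t. spans_from A ws R (Suc t) k" by blast
  then have "tau A ws R (Suc (Suc l)) = enat ?t" using t by simp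
  moreover have "t < ?t \<and> spans_from A ws R (Suc t) ?t" "?t \<le> Suc t + m"
    using witness by (rule LeastI, rule Least_le)
  ultimately show ?case using t by (auto simp: block_start_def)
qed

lemma tau_Suc_le:
  assumes windows: "\<And>s. spans_from A ws R s (s + m)"
  shows "tau A ws R (Suc l) \<le> tau A ws R l + enat (Suc m)"
proof (cases l)
  case 0
  obtain t where "tau A ws R (Suc 0) = enat t" "t \<le> m"
    using tau_Suc_enat[OF windows, of 0] by auto
  then show ?thesis using 0 by simp
next
  case (Suc l')
  obtain t' where "tau A ws R (Suc l') = enat t'" "block_start A ws R (Suc l') = Suc t'"
    using tau_Suc_enat[OF windows, of l'] by blast
  then have "tau A ws R l = enat t'" "block_start A ws R l = Suc t'" using Suc by simp_all
  moreover obtain t where "tau A ws R (Suc l) = enat t" "t \<le> block_start A ws R l + m"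
    using tau_Suc_enat[OF windows, of l] by blast
  ultimately show ?thesis by simp
qed

lemma block_start_le:
  assumes windows: "\<And>s. spans_from A ws R s (s + m)"
  shows "block_start A ws R l \<le> Suc m * l"
proof (induction l)
  case (Suc l)
  then show ?case using tau_Suc_enat[OF windows, of l] by auto
qed (simp add: block_start_def)

lemma normcols_Suc:
  assumes windows: "\<And>s. spans_from A ws R s (s + m)"
  shows "normcols A ws R (Suc l) = set (block_dirs A ws R l)"
proof -
  obtain t where t: "tau A ws R (Suc l) = enat t" "block_start A ws R (Suc l) = Suc t"
    using tau_Suc_enat[OF windows] by blast
  have "(if Suc l = 1 then 0 else Suc (the_enat (tau A ws R (Suc l - 1)))) = block_start A ws R l"
    by (simp add: block_start_def)
  moreover have "{i. block_start A ws R l \<le> i \<and> enat i \<le> tau A ws R (Suc l)}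
      = {block_start A ws R l..<block_start A ws R (Suc l)}"
    using t by auto
  ultimately show ?thesis by (simp add: normcols_def block_dirs_def kacz_dir_def)
qed

lemma span_block_dirs:
  assumes windows: "\<And>s. spans_from A ws R s (s + m)"
    and nz: "\<And>i. transpose A *v ws i \<noteq> 0"
  shows "span (set (block_dirs A ws R l)) = R"
proof -
  obtain t where t: "block_start A ws R (Suc l) = Suc t"
    and R: "spans_from A ws R (block_start A ws R l) t"
    using tau_Suc_enat[OF windows] by blast
  let ?X = "(\<lambda>i. transpose A *v ws i) ` {block_start A ws R l..t}"
  have "set (block_dirs A ws R l) = (\<lambda>x. (1 / norm x) *\<^sub>R x) ` ?X"
    using t by (auto simp: block_dirs_def kacz_dir_def image_image atLeastLessThanSuc_atLeastAtMost)
  also have "span \<dots> = span ?X"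
    by (rule span_image_scale) (use nz in auto)
  finally show ?thesis using R by (simp add: spans_from_def)
qed

lemma kacz_dir_in_window_span:
  assumes windows: "\<And>s. spans_from A ws R s (s + m)"
  shows "kacz_dir A ws i \<in> R"
proof -
  have R: "R = span ((\<lambda>k. transpose A *v ws k) ` {i..i + m})"
    using windows[of i] by (simp add: spans_from_def)
  show ?thesis unfolding kacz_dir_def R by (rule span_mul, rule span_base) simp
qed

lemma gamma_Suc_ge:
  assumes windows: "\<And>s. spans_from A ws R s (s + m)"
  shows "1 - gram_det (greedy_basis (block_dirs A ws R l)) \<le> gamma A ws R (Suc l)"
proof -
  have "greedy_basis (block_dirs A ws R l) \<in> Fmats (normcols A ws R (Suc l))"
    unfolding normcols_Suc[OF windows] by (rule greedy_basis_in_Fmats)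
  moreover have "finite (Fmats (normcols A ws R (Suc l)))"
    unfolding normcols_Suc[OF windows] by (simp add: finite_Fmats)
  ultimately show ?thesis by (simp add: gamma_def)
qed

lemma gamma_Suc_nonneg:
  assumes windows: "\<And>s. spans_from A ws R s (s + m)"
    and nz: "\<And>i. transpose A *v ws i \<noteq> 0"
  shows "0 \<le> gamma A ws R (Suc l)"
proof -
  have "gram_det (greedy_basis (block_dirs A ws R l)) \<le> 1"
    using set_greedy_basis_subset[of "block_dirs A ws R l"] norm_kacz_dir[OF nz]
    by (intro gram_det_le_1) (auto simp: block_dirs_def)
  then show ?thesis using gamma_Suc_ge[OF windows, of l] by simp
qed

definition max_gamma :: "'a::real_inner set \<Rightarrow> real" where
  "max_gamma V = 1 - Min (gram_det ` {F. distinct F \<and> set F \<subseteq> V \<and> independent (set F)})"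

lemma finite_independent_lists:
  "finite V \<Longrightarrow> finite {F. distinct F \<and> set F \<subseteq> V \<and> independent (set F)}"
  by (rule finite_subset[OF _ finite_subset_distinct]) auto

lemma max_gamma_nonneg: "finite V \<Longrightarrow> 0 \<le> max_gamma V"
  using finite_independent_lists[of V]
  by (auto simp: max_gamma_def gram_det_Nil independent_empty intro!: Min_le image_eqI[of 1 _ "[]"])

lemma max_gamma_less_1:
  fixes V :: "'a::euclidean_space set"
  assumes "finite V"
  shows "max_gamma V < 1"
proof -
  have "{F. distinct F \<and> set F \<subseteq> V \<and> independent (set F)} \<noteq> {}"
    by (auto intro!: exI[of _ "[]"] simp: independent_empty)
  then have "0 < Min (gram_det ` {F. distinct F \<and> set F \<subseteq> V \<and> independent (set F)})"
    using finite_independent_lists[OF assms] by (subst Min_gr_iff) (auto intro: gram_det_pos)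
  then show ?thesis by (simp add: max_gamma_def)
qed

lemma gamma_Suc_le_max_gamma:
  assumes windows: "\<And>s. spans_from A ws R s (s + m)"
    and V: "finite V" "\<And>i. kacz_dir A ws i \<in> V"
  shows "gamma A ws R (Suc l) \<le> max_gamma V"
proof -
  let ?S = "normcols A ws R (Suc l)"
  have "Fmats ?S \<subseteq> {F. distinct F \<and> set F \<subseteq> V \<and> independent (set F)}"
    using V(2) by (auto simp: Fmats_def normcols_Suc[OF windows] block_dirs_def)
  moreover have "Fmats ?S \<noteq> {}"
    using greedy_basis_in_Fmats by (auto simp: normcols_Suc[OF windows])
  ultimately have "Min (gram_det ` {F. distinct F \<and> set F \<subseteq> V \<and> independent (set F)})
      \<le> Min (gram_det ` Fmats ?S)"
    by (intro Min_antimono image_mono) (auto intro: finite_independent_lists[OF V(1)])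
  then show ?thesis by (simp add: gamma_def max_gamma_def)
qed

lemma kacz_block_contraction:
  assumes sol: "A *v xstar = b"
    and nz: "\<And>i. transpose A *v ws i \<noteq> 0"
    and n: "\<And>i. n \<bullet> (transpose A *v ws i) = 0"
    and windows: "\<And>s. spans_from A ws R s (s + m)"
    and start: "x0 - xstar - n \<in> R"
  shows "(norm (kacz A b ws x0 (block_start A ws R (Suc l)) - xstar - n))\<^sup>2
    \<le> gamma A ws R (Suc l) * (norm (kacz A b ws x0 (block_start A ws R l) - xstar - n))\<^sup>2"
proof -
  define e where "e k = kacz A b ws x0 k - xstar - n" for k
  obtain X where R: "R = span X" using windows[of 0] by (auto simp: spans_from_def)
  have e_in: "e k \<in> R" for k
  proof (induction k)
    case (Suc k)
    have "e (Suc k) = sweep [kacz_dir A ws k] (e k)"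
      by (simp only: e_def kacz_Suc_eq_sweep[OF sol n])
    also have "\<dots> \<in> R"
      using Suc kacz_dir_in_window_span[OF windows, of k] unfolding R by (intro sweep_in_span) auto
    finally show ?case .
  qed (use start in \<open>simp add: e_def\<close>)
  obtain t where t: "block_start A ws R (Suc l) = Suc t" "block_start A ws R l \<le> t"
    using tau_Suc_enat[OF windows] by blast
  then have eq: "e (block_start A ws R (Suc l)) = sweep (block_dirs A ws R l) (e (block_start A ws R l))"
    using kacz_eq_sweep[OF sol n, where x = x0 and s = "block_start A ws R l"
        and m = "Suc t - block_start A ws R l"]
    by (simp add: e_def block_dirs_def)
  have units: "norm u = 1" if "u \<in> set (block_dirs A ws R l)" for u
    using that nz norm_kacz_dir by (auto simp: block_dirs_def)
  have span: "e (block_start A ws R l) \<in> span (set (block_dirs A ws R l))"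
    using e_in span_block_dirs[OF windows nz] by simp
  have "(norm (e (block_start A ws R (Suc l))))\<^sup>2
      \<le> (1 - gram_det (greedy_basis (block_dirs A ws R l))) * (norm (e (block_start A ws R l)))\<^sup>2"
    unfolding eq
    by (rule norm_sweep_le_gram_det[of "block_dirs A ws R l" "e (block_start A ws R l)", OF units span])
  also have "\<dots> \<le> gamma A ws R (Suc l) * (norm (e (block_start A ws R l)))\<^sup>2"
    using gamma_Suc_ge[OF windows] by (rule mult_right_mono) simp
  finally show ?thesis by (simp add: e_def)
qed

lemma kacz_error_bound:
  assumes sol: "A *v xstar = b"
    and nz: "\<And>i. transpose A *v ws i \<noteq> 0"
    and n: "\<And>i. n \<bullet> (transpose A *v ws i) = 0"
    and windows: "\<And>s. spans_from A ws R s (s + m)"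
    and start: "x0 - xstar - n \<in> R"
    and g: "\<And>l. gamma A ws R (Suc l) \<le> g"
  shows "(norm (kacz A b ws x0 (Suc m * l) - xstar - n))\<^sup>2 \<le> g ^ l * (norm (x0 - xstar - n))\<^sup>2"
proof -
  define e where "e k = norm (kacz A b ws x0 k - xstar - n)" for k
  have unit: "norm (kacz_dir A ws i) = 1" for i using nz by (rule norm_kacz_dir)
  have "0 \<le> g" using g[of 0] gamma_Suc_nonneg[OF windows nz, of 0] by linarith
  have blocks: "(e (block_start A ws R l))\<^sup>2 \<le> g ^ l * (e 0)\<^sup>2" for l
  proof (induction l)
    case (Suc l)
    have "(e (block_start A ws R (Suc l)))\<^sup>2 \<le> gamma A ws R (Suc l) * (e (block_start A ws R l))\<^sup>2"
      unfolding e_def by (rule kacz_block_contraction[OF sol nz n windows start])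
    also have "\<dots> \<le> g * (g ^ l * (e 0)\<^sup>2)"
      using g Suc.IH \<open>0 \<le> g\<close> by (intro mult_mono) auto
    finally show ?case by simp
  qed simp
  have "e (Suc k) \<le> e k" for k
  proof -
    have "e (Suc k) = norm (sweep [kacz_dir A ws k] (kacz A b ws x0 k - xstar - n))"
      by (simp only: e_def kacz_Suc_eq_sweep[OF sol n])
    then have "(e (Suc k))\<^sup>2 \<le> (e k)\<^sup>2"
      using norm_sweep_step[OF unit[of k], of "kacz A b ws x0 k - xstar - n"] by (simp add: e_def)
    then show ?thesis by (rule power2_le_imp_le) (simp add: e_def)
  qed
  then have "e (Suc m * l) \<le> e (block_start A ws R l)"
    using block_start_le[OF windows] by (rule lift_Suc_antimono_le)
  then have "(e (Suc m * l))\<^sup>2 \<le> (e (block_start A ws R l))\<^sup>2"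
    by (rule power_mono) (simp add: e_def)
  also have "\<dots> \<le> g ^ l * (e 0)\<^sup>2" by (rule blocks)
  finally show ?thesis by (simp add: e_def)
qed

lemma kacz_error_bound_proj:
  assumes sol: "A *v xstar = b"
    and nz: "\<And>i. transpose A *v ws i \<noteq> 0"
    and U: "\<And>i. transpose A *v ws i \<in> U"
    and windows: "\<And>s. spans_from A ws (span U) s (s + m)"
    and g: "\<And>l. gamma A ws (span U) (Suc l) \<le> g"
  shows "(norm (kacz A b ws x0 (Suc m * l) - xstar - proj (orth_comp U) (x0 - xstar)))\<^sup>2
    \<le> g ^ l * (norm (proj (span U) (x0 - xstar)))\<^sup>2"
proof -
  let ?n = "proj (orth_comp U) (x0 - xstar)"
  have "?n \<in> orth_comp U"
    unfolding proj_orth_comp by (rule sub_proj_span_in_orth_comp)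
  then have n: "?n \<bullet> (transpose A *v ws i) = 0" for i
    using U by (simp add: orth_comp_def)
  have start: "x0 - xstar - ?n = proj (span U) (x0 - xstar)"
    by (simp add: proj_orth_comp)
  then have "x0 - xstar - ?n \<in> span U" by (simp add: proj_span_in)
  from kacz_error_bound[OF sol nz n windows this g] show ?thesis by (simp add: start)
qed

lemma LIMSEQ_prod_le_less_1:
  fixes f :: "nat \<Rightarrow> real"
  assumes "g < 1" and f: "\<And>j. 1 \<le> j \<Longrightarrow> 0 \<le> f j \<and> f j \<le> g"
  shows "(\<lambda>l. \<Prod>j=1..l. f j) \<longlonglongrightarrow> 0"
proof (rule real_tendsto_sandwich)
  show "\<forall>\<^sub>F l in sequentially. 0 \<le> (\<Prod>j=1..l. f j)"
    using f by (intro always_eventually allI prod_nonneg) auto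
  show "\<forall>\<^sub>F l in sequentially. (\<Prod>j=1..l. f j) \<le> g ^ l"
    using f by (intro always_eventually allI) (simp add: prod_mono[of "{1..l}" f "\<lambda>_. g" for l, simplified])
  have "0 \<le> g" using f[of 1] by simp
  then show "(\<lambda>l. g ^ l) \<longlonglongrightarrow> 0" using assms(1) by (intro LIMSEQ_power_zero) simp
qed simp

lemma set_pmf_eq_of_sum_pmf:
  assumes "finite W" "\<And>v. v \<in> W \<Longrightarrow> 0 < pmf w v" "(\<Sum>v\<in>W. pmf w v) = 1"
  shows "set_pmf w = W"
proof
  show "W \<subseteq> set_pmf w" by (auto simp: set_pmf_iff dest!: assms(2))
  have "measure_pmf.prob w W = 1" using assms(1,3) by (simp add: measure_measure_pmf_finite)
  then have "AE v in w. v \<in> W" by (subst (asm) measure_pmf.prob_eq_1) auto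
  then show "set_pmf w \<subseteq> W" by (auto simp: AE_measure_pmf_iff)
qed

lemma nullsp_eq_orth_comp: "nullsp A w = orth_comp ((\<lambda>v. transpose A *v v) ` set_pmf w)"
proof -
  have "{z. measure_pmf.prob w {v. z \<bullet> (transpose A *v v) = 0} = 1}
      = orth_comp ((\<lambda>v. transpose A *v v) ` set_pmf w)"
    by (subst measure_pmf.prob_eq_1) (auto simp: AE_measure_pmf_iff orth_comp_def)
  then show ?thesis by (simp add: nullsp_def span_eq_iff subspace_orth_comp)
qed

section \<open>Sampling without replacement\<close>

lemma block_perm_mem:
  assumes "block_perm N W ws" "0 < N"
  shows "ws i \<in> W"
proof -
  have "bij_betw (\<lambda>j. ws (i div N * N + j)) {..<N} W"
    using assms(1) by (simp add: block_perm_def)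
  moreover have "i mod N \<in> {..<N}" using assms(2) by simp
  ultimately have "ws (i div N * N + i mod N) \<in> W" by (blast dest: bij_betwE)
  then show ?thesis by simp
qed

lemma block_perm_windows:
  assumes "block_perm N W ws" "0 < N"
  shows "spans_from A ws (span ((\<lambda>v. transpose A *v v) ` W)) s (s + (2 * N - 1))"
proof -
  define q where "q = (s + N - 1) div N"
    \<comment> \<open>\<open>q * N\<close> is the first multiple of \<open>N\<close> that is at least \<open>s\<close>\<close>
  have q: "s \<le> q * N" "q * N + N \<le> s + 2 * N"
    using div_mult_mod_eq[of "s + N - 1" N] mod_less_divisor[OF assms(2), of "s + N - 1"] assms(2)
    unfolding q_def by linarith+
  let ?I = "{s..s + (2 * N - 1)}"
  have W: "W = (\<lambda>j. ws (q * N + j)) ` {..<N}"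
    using assms(1) by (simp add: block_perm_def bij_betw_def)
  have "W \<subseteq> ws ` ?I"
  proof
    fix v assume "v \<in> W"
    then obtain j where "j < N" "v = ws (q * N + j)" using W by auto
    moreover have "q * N + j \<in> ?I" using q \<open>j < N\<close> by simp
    ultimately show "v \<in> ws ` ?I" by blast
  qed
  moreover have "ws ` ?I \<subseteq> W"
    using block_perm_mem[OF assms] by auto
  ultimately have "ws ` ?I = W" by (rule subset_antisym[rotated])
  then have "(\<lambda>i. transpose A *v ws i) ` ?I = (\<lambda>v. transpose A *v v) ` W"
    using image_image[of "\<lambda>v. transpose A *v v" ws ?I] by simp
  then show ?thesis by (simp add: spans_from_def)
qed

theorem mainTheorem14:
  fixes A :: "real^'d^'n" and b :: "real^'n" and xstar :: "real^'d"
    and W :: "(real^'n) set" and w :: "(real^'n) pmf" and N :: nat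
  assumes sol: "A *v xstar = b"
    and finW: "finite W" and cardW: "card W = N"
    and pos: "\<forall>v\<in>W. pmf w v > 0"
    and sum1: "(\<Sum>v\<in>W. pmf w v) = 1"
    and nz: "\<forall>v\<in>W. transpose A *v v \<noteq> 0"
  shows "(\<forall>ws. block_perm N W ws \<longrightarrow>
            (\<forall>l\<ge>1. tau A ws (orth_comp (nullsp A w)) l
                     \<le> tau A ws (orth_comp (nullsp A w)) (l - 1) + enat (2 * N)) \<and>
            (\<lambda>l. \<Prod>j=1..l. gamma A ws (orth_comp (nullsp A w)) j) \<longlonglongrightarrow> 0)
       \<and> (\<exists>g::real. 0 \<le> g \<and> g < 1 \<and>
            (\<forall>ws. block_perm N W ws \<longrightarrow>
               (\<forall>j\<ge>1. gamma A ws (orth_comp (nullsp A w)) j \<le> g) \<and>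
               (\<forall>x0 l. (norm (kacz A b ws x0 (2 * N * l) - xstar
                              - proj (nullsp A w) (x0 - xstar)))^2
                        \<le> g ^ l * (norm (proj (orth_comp (nullsp A w)) (x0 - xstar)))^2)))"
proof -
  let ?U = "(\<lambda>v. transpose A *v v) ` W"
  define g where "g = max_gamma ((\<lambda>x. (1 / norm x) *\<^sub>R x) ` ?U)"
  have "0 < N" using finW cardW sum1 by (cases "W = {}") auto
  have null: "nullsp A w = orth_comp ?U"
    using set_pmf_eq_of_sum_pmf[OF finW _ sum1] pos nullsp_eq_orth_comp by auto
  have "0 \<le> g" "g < 1" using finW by (simp_all add: g_def max_gamma_nonneg max_gamma_less_1)
  moreover have "(\<forall>l\<ge>1. tau A ws (span ?U) l \<le> tau A ws (span ?U) (l - 1) + enat (2 * N))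
      \<and> (\<forall>j\<ge>1. 0 \<le> gamma A ws (span ?U) j \<and> gamma A ws (span ?U) j \<le> g)
      \<and> (\<forall>x0 l. (norm (kacz A b ws x0 (2 * N * l) - xstar - proj (orth_comp ?U) (x0 - xstar)))\<^sup>2
                 \<le> g ^ l * (norm (proj (span ?U) (x0 - xstar)))\<^sup>2)"
    if ws: "block_perm N W ws" for ws
  proof (intro conjI allI impI)
    have windows: "spans_from A ws (span ?U) s (s + (2 * N - 1))" for s
      by (rule block_perm_windows[OF ws \<open>0 < N\<close>])
    have U: "transpose A *v ws i \<in> ?U" and ws_nz: "transpose A *v ws i \<noteq> 0" for i
      using block_perm_mem[OF ws \<open>0 < N\<close>] nz by auto
    have gamma_le: "gamma A ws (span ?U) (Suc j) \<le> g" for j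
      unfolding g_def using finW U by (intro gamma_Suc_le_max_gamma[OF windows]) (auto simp: kacz_dir_def)
    show "tau A ws (span ?U) l \<le> tau A ws (span ?U) (l - 1) + enat (2 * N)" if "1 \<le> l" for l
      using that tau_Suc_le[OF windows, of "l - 1"] \<open>0 < N\<close> by simp
    show "0 \<le> gamma A ws (span ?U) j" "gamma A ws (span ?U) j \<le> g" if "1 \<le> j" for j
      using that gamma_Suc_nonneg[OF windows ws_nz, of "j - 1"] gamma_le[of "j - 1"] by simp_all
    show "(norm (kacz A b ws x0 (2 * N * l) - xstar - proj (orth_comp ?U) (x0 - xstar)))\<^sup>2
        \<le> g ^ l * (norm (proj (span ?U) (x0 - xstar)))\<^sup>2" for x0 l
      using kacz_error_bound_proj[OF sol ws_nz U windows gamma_le, of x0 l] \<open>0 < N\<close> by simp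
  qed
  ultimately show ?thesis
    unfolding null orth_comp_orth_comp by (blast intro: LIMSEQ_prod_le_less_1)
qed

end
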